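(* Let $n,m,N$ be positive integers, $p_1,\ldots,p_N,q_1,\ldots,q_N,g_1,\ldots,g_m\in\mathbb{R}[\mathbf{x}]$, $\mathbf{x}=(x_1,\ldots,x_n)$, and $\mathbf{K}=\{\mathbf{x}\in\mathbb{R}^n\mid g_j(\mathbf{x})\ge0,\ j\in[m]\}$. Assume $\mathbf{K}$ is compact, $q_i>0$ on $\mathbf{K}$ for all $i\in[N]$, and the quadratic module $\mathcal{Q}(\mathbf{g})$ is Archimedean. Let $\rho=\inf_{\mathbf{x}\in\mathbf{K}}\sum_{i=1}^N p_i(\mathbf{x})/q_i(\mathbf{x})$ and, for integers $k\ge d_{\min}$, \[ \rho_k=\sup\Big\{c\ \Big|\ c\in\mathbb{R},\ h_i\in\mathbb{R}[\mathbf{x}]_{2k-\max\{\deg q_1,\deg q_i\}}\ (i=2,\ldots,N),\ p_1+\Big(\sum_{i=2}^N h_i-c\Big)q_1\in\mathcal{Q}_k(\mathbf{g}),\ p_i-h_iq_i\in\mathcal{Q}_k(\mathbf{g})\ (i=2,\ldots,N)\Big\}. \] Then $\rho_k\le\rho_{k+1}\le\rho$ for all $k\ge d_{\min}$ and $\rho_k\to\rho$ as $k\to\infty$.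
   Context: $\mathbb{R}[\mathbf{x}]_d$ denotes polynomials of degree at most $d$; $\Sigma[\mathbf{x}]$ denotes the set of sums of squares of polynomials. $\mathbf{g}=\{g_1,\ldots,g_m\}$. The quadratic module is $\mathcal{Q}(\mathbf{g})=\{\sigma_0+\sum_{j=1}^m\sigma_jg_j\mid \sigma_j\in\Sigma[\mathbf{x}]\}$, and the $k$-th truncated quadratic module is $\mathcal{Q}_k(\mathbf{g})=\{\sigma_0+\sum_{j=1}^m\sigma_jg_j\mid\sigma_j\in\Sigma[\mathbf{x}],\ \deg\sigma_0\le 2k,\ \deg(\sigma_jg_j)\le 2k\}$. $\mathcal{Q}(\mathbf{g})$ is Archimedean if there is $M>0$ with $M-x_1^2-\cdots-x_n^2\in\mathcal{Q}(\mathbf{g})$. With $d_j=\lceil \deg(g_j)/2\rceil$, $d_{\min}=\max\{\lceil\deg(p_i)/2\rceil,\lceil\deg(q_i)/2\rceil\ (i\in[N]);\ d_j\ (j\in[m])\}$. *)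

theory Defs
  imports "HOL-Analysis.Analysis" "HOL-Library.Poly_Mapping" "HOL-Library.Extended_Real"
begin

text \<open>Real multivariate polynomials in the variables indexed by the finite type 'n,
  represented as finitely supported maps from exponent vectors (monomials) to coefficients.
  Multiplication is the convolution product of Poly_Mapping.\<close>
type_synonym 'n mpoly = "('n \<Rightarrow>\<^sub>0 nat) \<Rightarrow>\<^sub>0 real"

definition mon_deg :: "('n \<Rightarrow>\<^sub>0 nat) \<Rightarrow> nat" where
  "mon_deg a = sum (Poly_Mapping.lookup a) (Poly_Mapping.keys a)"

text \<open>Total degree (the zero polynomial gets degree 0).\<close>
definition mdeg :: "'n mpoly \<Rightarrow> nat" where
  "mdeg p = Max (insert 0 (mon_deg ` Poly_Mapping.keys p))"

definition meval :: "'n::finite mpoly \<Rightarrow> real ^ 'n \<Rightarrow> real" where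
  "meval p x = (\<Sum>a\<in>Poly_Mapping.keys p. Poly_Mapping.lookup p a * (\<Prod>i\<in>Poly_Mapping.keys a. (x $ i) ^ Poly_Mapping.lookup a i))"

definition mconst :: "real \<Rightarrow> 'n mpoly" where
  "mconst c = Poly_Mapping.single 0 c"

definition mvar :: "'n \<Rightarrow> 'n mpoly" where
  "mvar i = Poly_Mapping.single (Poly_Mapping.single i 1) 1"

definition is_sos :: "'n mpoly \<Rightarrow> bool" where
  "is_sos s \<longleftrightarrow> (\<exists>fs. s = sum_list (map (\<lambda>f. f * f) fs))"

definition qmodule :: "nat \<Rightarrow> (nat \<Rightarrow> 'n::finite mpoly) \<Rightarrow> 'n mpoly set" where
  "qmodule m g = {f. \<exists>\<sigma>. (\<forall>j\<in>{0..m}. is_sos (\<sigma> j)) \<and>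
      f = \<sigma> 0 + (\<Sum>j=1..m. \<sigma> j * g j)}"

definition qmodule_k :: "nat \<Rightarrow> (nat \<Rightarrow> 'n::finite mpoly) \<Rightarrow> nat \<Rightarrow> 'n mpoly set" where
  "qmodule_k m g k = {f. \<exists>\<sigma>. (\<forall>j\<in>{0..m}. is_sos (\<sigma> j)) \<and>
      mdeg (\<sigma> 0) \<le> 2 * k \<and> (\<forall>j\<in>{1..m}. mdeg (\<sigma> j * g j) \<le> 2 * k) \<and>
      f = \<sigma> 0 + (\<Sum>j=1..m. \<sigma> j * g j)}"

definition archimedean :: "nat \<Rightarrow> (nat \<Rightarrow> 'n::finite mpoly) \<Rightarrow> bool" where
  "archimedean m g \<longleftrightarrow> (\<exists>M>0. mconst M - (\<Sum>i\<in>UNIV. mvar i * mvar i) \<in> qmodule m g)"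

definition semialg :: "nat \<Rightarrow> (nat \<Rightarrow> 'n::finite mpoly) \<Rightarrow> (real ^ 'n) set" where
  "semialg m g = {x. \<forall>j\<in>{1..m}. meval (g j) x \<ge> 0}"

definition half_up :: "nat \<Rightarrow> nat" where
  "half_up d = (d + 1) div 2"

definition d_min :: "nat \<Rightarrow> nat \<Rightarrow> (nat \<Rightarrow> 'n::finite mpoly) \<Rightarrow> (nat \<Rightarrow> 'n::finite mpoly) \<Rightarrow> (nat \<Rightarrow> 'n::finite mpoly) \<Rightarrow> nat" where
  "d_min N m p q g = Max ((\<lambda>i. half_up (mdeg (p i))) ` {1..N} \<union> (\<lambda>i. half_up (mdeg (q i))) ` {1..N}
                          \<union> (\<lambda>j. half_up (mdeg (g j))) ` {1..m})"

text \<open>rho = inf over K of sum p_i/q_i (extended real: inf of empty set is +infinity).\<close>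
definition rho :: "nat \<Rightarrow> nat \<Rightarrow> (nat \<Rightarrow> 'n::finite mpoly) \<Rightarrow> (nat \<Rightarrow> 'n::finite mpoly) \<Rightarrow> (nat \<Rightarrow> 'n::finite mpoly) \<Rightarrow> ereal" where
  "rho N m p q g = (INF x\<in>semialg m g. ereal (\<Sum>i=1..N. meval (p i) x / meval (q i) x))"

text \<open>rho_k (extended real: sup of empty set is -infinity).\<close>
definition rho_k :: "nat \<Rightarrow> nat \<Rightarrow> (nat \<Rightarrow> 'n::finite mpoly) \<Rightarrow> (nat \<Rightarrow> 'n::finite mpoly) \<Rightarrow> (nat \<Rightarrow> 'n::finite mpoly) \<Rightarrow> nat \<Rightarrow> ereal" where
  "rho_k N m p q g k = Sup {ereal c | c. \<exists>h :: nat \<Rightarrow> 'n mpoly.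
      (\<forall>i\<in>{2..N}. mdeg (h i) \<le> 2 * k - max (mdeg (q 1)) (mdeg (q i))) \<and>
      p 1 + ((\<Sum>i=2..N. h i) - mconst c) * q 1 \<in> qmodule_k m g k \<and>
      (\<forall>i\<in>{2..N}. p i - h i * q i \<in> qmodule_k m g k)}"

end

theory Submission
  imports Defs
begin

text \<open>
  The inequalities between the bounds are elementary: a certificate of level \<open>k\<close> is one of
  level \<open>k + 1\<close>, and evaluating a certificate at a point \<open>x\<close> of \<open>K\<close> gives
  \<open>h\<^sub>i(x) \<le> p\<^sub>i(x)/q\<^sub>i(x)\<close> and \<open>c \<le> p\<^sub>1(x)/q\<^sub>1(x) + \<Sum> h\<^sub>i(x)\<close>. For convergence, given
  \<open>c < \<rho>\<close>, approximate each \<open>p\<^sub>i/q\<^sub>i\<close> (\<open>i \<ge> 2\<close>) uniformly on \<open>K\<close> from below by a polynomial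
  \<open>h\<^sub>i\<close> (Stone-Weierstrass). Then \<open>p\<^sub>i - h\<^sub>i q\<^sub>i\<close> and \<open>p\<^sub>1 + (\<Sum> h\<^sub>i - c) q\<^sub>1\<close> are strictly positive
  on \<open>K\<close>, so by Putinar's Positivstellensatz they lie in \<open>Q(g)\<close>, hence in \<open>Q\<^sub>k(g)\<close> for all
  large \<open>k\<close>.

  Putinar's theorem is proved following Jacobi and Marshall. If \<open>f > 0\<close> on \<open>K\<close> but
  \<open>f t - 1 \<notin> Q(g)\<close> for every sum of squares \<open>t\<close>, Zorn's lemma yields a maximal quadratic
  module \<open>M\<close> containing \<open>Q(g)\<close> and \<open>-f\<close> but not \<open>-1\<close>. Being archimedean and maximal, \<open>M\<close>
  contains \<open>a\<close> or \<open>-a\<close> for every \<open>a\<close>, and \<open>a \<mapsto> sup {r. a - r \<in> M}\<close> is a ring homomorphism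
  to the reals, i.e. evaluation at a point of \<open>K\<close> where \<open>f \<le> 0\<close>. Finally a certificate
  \<open>f t \<in> 1 + Q(g)\<close> is turned into \<open>f \<in> Q(g)\<close> by lowering the constant in \<open>f + R \<in> Q(g)\<close>
  by a fixed amount at a time.
\<close>

section \<open>Evaluation of polynomials\<close>

lemma poly_mapping_sum_single:
  fixes p :: "'a \<Rightarrow>\<^sub>0 'b::comm_monoid_add"
  assumes "finite S" "Poly_Mapping.keys p \<subseteq> S"
  shows "p = (\<Sum>a\<in>S. Poly_Mapping.single a (Poly_Mapping.lookup p a))"
proof (rule poly_mapping_eqI)
  fix k
  show "Poly_Mapping.lookup p k = Poly_Mapping.lookup (\<Sum>a\<in>S. Poly_Mapping.single a (Poly_Mapping.lookup p a)) k"
    using assms by (cases "k \<in> S") (auto simp: lookup_sum lookup_single when_def in_keys_iff)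
qed

definition mon_eval :: "('n::finite \<Rightarrow>\<^sub>0 nat) \<Rightarrow> real ^ 'n \<Rightarrow> real" where
  "mon_eval a x = (\<Prod>i\<in>UNIV. (x $ i) ^ Poly_Mapping.lookup a i)"

lemma mon_eval_zero: "mon_eval 0 x = 1"
  by (simp add: mon_eval_def)

lemma mon_eval_add: "mon_eval (a + b) x = mon_eval a x * mon_eval b x"
  by (simp add: mon_eval_def lookup_add power_add prod.distrib)

lemma meval_eq_sum_mon_eval:
  assumes "finite S" "Poly_Mapping.keys p \<subseteq> S"
  shows "meval p x = (\<Sum>a\<in>S. Poly_Mapping.lookup p a * mon_eval a x)"
proof -
  have "meval p x = (\<Sum>a\<in>Poly_Mapping.keys p. Poly_Mapping.lookup p a * mon_eval a x)"
    unfolding meval_def mon_eval_def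
    by (intro sum.cong refl arg_cong2[where f = "(*)"] prod.mono_neutral_left) (auto simp: in_keys_iff)
  also have "\<dots> = (\<Sum>a\<in>S. Poly_Mapping.lookup p a * mon_eval a x)"
    using assms by (intro sum.mono_neutral_left) (auto simp: in_keys_iff)
  finally show ?thesis .
qed

lemma meval_zero [simp]: "meval 0 x = 0"
  by (simp add: meval_def)

lemma meval_single: "meval (Poly_Mapping.single a c) x = c * mon_eval a x"
  by (subst meval_eq_sum_mon_eval[of "{a}"]) auto

lemma meval_add [simp]: "meval (p + q) x = meval p x + meval q x"
proof -
  let ?S = "Poly_Mapping.keys p \<union> Poly_Mapping.keys q"
  have "Poly_Mapping.keys (p + q) \<subseteq> ?S" by (rule keys_add)
  then show ?thesis
    by (simp add: meval_eq_sum_mon_eval[of ?S] lookup_add distrib_right sum.distrib)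
qed

lemma meval_sum [simp]: "meval (\<Sum>i\<in>I. f i) x = (\<Sum>i\<in>I. meval (f i) x)"
  by (induction I rule: infinite_finite_induct) simp_all

lemma meval_mult [simp]: "meval (p * q) x = meval p x * meval q x"
proof -
  let ?mon = "\<lambda>p a. Poly_Mapping.single a (Poly_Mapping.lookup p a)"
  have "p * q = (\<Sum>a\<in>Poly_Mapping.keys p. \<Sum>b\<in>Poly_Mapping.keys q. ?mon p a * ?mon q b)"
    by (subst poly_mapping_sum_single[OF finite_keys order_refl, of p],
        subst poly_mapping_sum_single[OF finite_keys order_refl, of q]) (rule sum_product)
  then have "meval (p * q) x = (\<Sum>a\<in>Poly_Mapping.keys p. \<Sum>b\<in>Poly_Mapping.keys q.
      (Poly_Mapping.lookup p a * mon_eval a x) * (Poly_Mapping.lookup q b * mon_eval b x))"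
    by (simp add: mult_single meval_single mon_eval_add mult_ac)
  also have "\<dots> = meval p x * meval q x"
    by (simp add: meval_eq_sum_mon_eval[OF finite_keys order_refl] sum_product)
  finally show ?thesis .
qed

lemma meval_mconst [simp]: "meval (mconst c) x = c"
  by (simp add: mconst_def meval_single mon_eval_zero)

lemma meval_uminus [simp]: "meval (- p) x = - meval p x"
  using meval_add[of "- p" p x] by simp

lemma meval_diff [simp]: "meval (p - q) x = meval p x - meval q x"
  using meval_add[of p "- q" x] by simp

lemma meval_mvar [simp]: "meval (mvar i) x = x $ i"
proof -
  have "mon_eval (Poly_Mapping.single i 1) x = (\<Prod>j\<in>UNIV. if j = i then x $ i else 1)"
    unfolding mon_eval_def by (intro prod.cong refl) (auto simp: lookup_single when_def)
  then show ?thesis by (simp add: mvar_def meval_single)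
qed

lemma mconst_0: "mconst 0 = 0"
  by (simp add: mconst_def)

lemma mconst_1: "mconst 1 = 1"
  by (simp add: mconst_def)

lemma mconst_add: "mconst (a + b) = mconst a + mconst b"
  by (simp add: mconst_def single_add)

lemma mconst_mult: "mconst (a * b) = mconst a * mconst b"
  by (simp add: mconst_def mult_single)

lemma mconst_uminus: "mconst (- a) = - mconst a"
  by (simp add: mconst_def single_uminus)

lemma mconst_diff: "mconst (a - b) = mconst a - mconst b"
  by (simp add: mconst_def single_diff)

lemma mvar_power: "mvar i ^ k = Poly_Mapping.single (Poly_Mapping.single i k) (1::real)"
proof (induction k)
  case (Suc k)
  have "Poly_Mapping.single i k + Poly_Mapping.single i 1 = Poly_Mapping.single i (Suc k)"
    by (simp flip: single_add)
  with Suc show ?case by (simp add: mvar_def mult_single mult.commute)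
qed simp

lemma single_one_eq_prod_mvar_power:
  "Poly_Mapping.single (a :: 'n::finite \<Rightarrow>\<^sub>0 nat) (1::real) = (\<Prod>i\<in>UNIV. mvar i ^ Poly_Mapping.lookup a i)"
proof -
  have prod_single: "(\<Prod>i\<in>S. Poly_Mapping.single (Poly_Mapping.single i (k i)) (1::real)) =
      Poly_Mapping.single (\<Sum>i\<in>S. Poly_Mapping.single i (k i)) 1" if "finite S" for S k
    using that by (induction S rule: finite_induct) (simp_all add: mult_single)
  have "a = (\<Sum>i\<in>UNIV. Poly_Mapping.single i (Poly_Mapping.lookup a i))"
    by (rule poly_mapping_sum_single) auto
  then show ?thesis by (simp add: mvar_power prod_single)
qed

lemma mpoly_induct [case_names const var add mult]:
  fixes P :: "'n::finite mpoly \<Rightarrow> bool"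
  assumes const: "\<And>c. P (mconst c)" and var: "\<And>i. P (mvar i)"
    and add: "\<And>p q. P p \<Longrightarrow> P q \<Longrightarrow> P (p + q)"
    and mult: "\<And>p q. P p \<Longrightarrow> P q \<Longrightarrow> P (p * q)"
  shows "P p"
proof -
  have sum: "P (\<Sum>i\<in>I. f i)" if "\<And>i. P (f i)" for f :: "_ \<Rightarrow> 'n mpoly" and I
    using that by (induction I rule: infinite_finite_induct) (use const[of 0] add in \<open>simp_all add: mconst_0\<close>)
  have prod: "P (\<Prod>i\<in>I. f i)" if "\<And>i. P (f i)" for f :: "_ \<Rightarrow> 'n mpoly" and I
    using that by (induction I rule: infinite_finite_induct) (use const[of 1] mult in \<open>simp_all add: mconst_1\<close>)
  have power: "P (q ^ k)" if "P q" for q :: "'n mpoly" and k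
    using that by (induction k) (use const[of 1] mult in \<open>simp_all add: mconst_1\<close>)
  have "P (Poly_Mapping.single a c)" for a c
  proof -
    have "Poly_Mapping.single a c = mconst c * (\<Prod>i\<in>UNIV. mvar i ^ Poly_Mapping.lookup a i)"
      by (simp add: mconst_def mult_single flip: single_one_eq_prod_mvar_power)
    then show ?thesis by (simp add: mult const prod power var)
  qed
  then show ?thesis
    by (subst poly_mapping_sum_single[OF finite_keys order_refl]) (rule sum)
qed

lemma ring_hom_eq_meval:
  fixes \<phi> :: "'n::finite mpoly \<Rightarrow> real"
  assumes "\<And>p q. \<phi> (p + q) = \<phi> p + \<phi> q" "\<And>p q. \<phi> (p * q) = \<phi> p * \<phi> q" "\<And>c. \<phi> (mconst c) = c"
  shows "\<phi> p = meval p (\<chi> i. \<phi> (mvar i))"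
  by (induction p rule: mpoly_induct) (simp_all add: assms)

lemma continuous_on_meval: "continuous_on S (meval p)"
  by (induction p rule: mpoly_induct) (auto intro: continuous_intros continuous_on_component)

lemma real_polynomial_function_eq_meval:
  fixes w :: "real ^ 'n::finite \<Rightarrow> real"
  assumes "real_polynomial_function w"
  shows "\<exists>P. meval P = w"
  using assms
proof (induction w rule: real_polynomial_function.induct)
  case (linear f)
  have "meval (\<Sum>i\<in>UNIV. mconst (f (axis i 1)) * mvar i) x = f x" for x
  proof -
    have "f x = f (\<Sum>i\<in>UNIV. x $ i *\<^sub>R axis i 1)"
      using basis_expansion[of x] by (simp add: scalar_mult_eq_scaleR)
    also have "\<dots> = (\<Sum>i\<in>UNIV. x $ i * f (axis i 1))"
      using bounded_linear.linear[OF linear] by (simp add: linear_sum linear_scale)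
    finally show ?thesis by (simp add: mult.commute)
  qed
  then show ?case by blast
next
  case (const c)
  have "meval (mconst c) = (\<lambda>x. c)" by auto
  then show ?case by blast
next
  case (add f g)
  then obtain P Q where "meval P = f" "meval Q = g" by blast
  then have "meval (P + Q) = (\<lambda>x. f x + g x)" by auto
  then show ?case by blast
next
  case (mult f g)
  then obtain P Q where "meval P = f" "meval Q = g" by blast
  then have "meval (P * Q) = (\<lambda>x. f x * g x)" by auto
  then show ?case by blast
qed

section \<open>Sums of squares and quadratic modules\<close>

lemma is_sos_0: "is_sos 0"
  unfolding is_sos_def by (rule exI[of _ "[]"]) simp

lemma is_sos_square: "is_sos (s * s)"
  unfolding is_sos_def by (rule exI[of _ "[s]"]) simp

lemma is_sos_1: "is_sos 1"
  using is_sos_square[of 1] by simp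

lemma is_sos_add:
  assumes "is_sos a" "is_sos b"
  shows "is_sos (a + b)"
proof -
  obtain fs gs where "a = sum_list (map (\<lambda>f. f * f) fs)" "b = sum_list (map (\<lambda>f. f * f) gs)"
    using assms unfolding is_sos_def by blast
  then have "a + b = sum_list (map (\<lambda>f. f * f) (fs @ gs))"
    by simp
  then show ?thesis
    unfolding is_sos_def by blast
qed

lemma is_sos_square_mult:
  assumes "is_sos a"
  shows "is_sos (s * s * a)"
proof -
  obtain fs where "a = sum_list (map (\<lambda>f. f * f) fs)"
    using assms unfolding is_sos_def by blast
  moreover have "s * s * sum_list (map (\<lambda>f. f * f) fs) = sum_list (map (\<lambda>f. f * f) (map ((*) s) fs))" for fs
    by (induction fs) (simp_all add: distrib_left mult_ac)
  ultimately show ?thesis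
    unfolding is_sos_def by blast
qed

lemma is_sos_mconst: "c \<ge> 0 \<Longrightarrow> is_sos (mconst c)"
  using is_sos_square[of "mconst (sqrt c)"] by (simp flip: mconst_mult)

lemma is_sos_meval_nonneg: "is_sos s \<Longrightarrow> meval s x \<ge> 0"
proof -
  have "meval (sum_list (map (\<lambda>f. f * f) fs)) x \<ge> 0" for fs
    by (induction fs) simp_all
  then show "is_sos s \<Longrightarrow> meval s x \<ge> 0"
    unfolding is_sos_def by blast
qed

locale quadratic_module =
  fixes M :: "'n mpoly set"
  assumes add_mem: "a \<in> M \<Longrightarrow> b \<in> M \<Longrightarrow> a + b \<in> M"
    and square_mem: "s * s \<in> M"
    and square_mult_mem: "a \<in> M \<Longrightarrow> s * s * a \<in> M"
begin

lemma zero_mem: "0 \<in> M"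
  using square_mem[of 0] by simp

lemma one_mem: "1 \<in> M"
  using square_mem[of 1] by simp

lemma sum_mem: "(\<And>i. i \<in> I \<Longrightarrow> f i \<in> M) \<Longrightarrow> (\<Sum>i\<in>I. f i) \<in> M"
  by (induction I rule: infinite_finite_induct) (simp_all add: zero_mem add_mem)

lemma sos_mult_mem:
  assumes "is_sos t" "a \<in> M"
  shows "t * a \<in> M"
proof -
  have "sum_list (map (\<lambda>f. f * f) fs) * a \<in> M" for fs
    by (induction fs) (simp_all add: zero_mem add_mem square_mult_mem assms(2) distrib_right)
  then show ?thesis
    using assms(1) unfolding is_sos_def by blast
qed

lemma sos_mem: "is_sos t \<Longrightarrow> t \<in> M"
  using sos_mult_mem[OF _ one_mem] by simp

lemma mconst_mem: "c \<ge> 0 \<Longrightarrow> mconst c \<in> M"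
  by (simp add: sos_mem is_sos_mconst)

lemma mconst_mult_mem: "c \<ge> 0 \<Longrightarrow> a \<in> M \<Longrightarrow> mconst c * a \<in> M"
  by (simp add: sos_mult_mem is_sos_mconst)

lemma add_mconst_mem: "a \<in> M \<Longrightarrow> c \<ge> 0 \<Longrightarrow> a + mconst c \<in> M"
  by (simp add: add_mem mconst_mem)

end

definition qm_adjoin :: "'n mpoly set \<Rightarrow> 'n mpoly \<Rightarrow> 'n mpoly set" where
  "qm_adjoin M b = {a + b * t | a t. a \<in> M \<and> is_sos t}"

lemma (in quadratic_module) quadratic_module_qm_adjoin: "quadratic_module (qm_adjoin M b)"
proof
  fix x y assume "x \<in> qm_adjoin M b" "y \<in> qm_adjoin M b"
  then obtain a t a' t' where "x = a + b * t" "y = a' + b * t'" "a \<in> M" "a' \<in> M" "is_sos t" "is_sos t'"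
    unfolding qm_adjoin_def by blast
  moreover have "x + y = (a + a') + b * (t + t')" if "x = a + b * t" "y = a' + b * t'"
    using that by (simp add: algebra_simps)
  ultimately have "x + y = (a + a') + b * (t + t')" "a + a' \<in> M" "is_sos (t + t')"
    by (simp_all add: add_mem is_sos_add)
  then show "x + y \<in> qm_adjoin M b"
    unfolding qm_adjoin_def by blast
next
  fix s
  have "s * s = s * s + b * 0" by simp
  then show "s * s \<in> qm_adjoin M b"
    unfolding qm_adjoin_def using square_mem is_sos_0 by blast
next
  fix s x assume "x \<in> qm_adjoin M b"
  then obtain a t where "x = a + b * t" "a \<in> M" "is_sos t"
    unfolding qm_adjoin_def by blast
  moreover have "s * s * x = s * s * a + b * (s * s * t)" if "x = a + b * t"
    using that by (simp add: algebra_simps)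
  ultimately have "s * s * x = s * s * a + b * (s * s * t)" "s * s * a \<in> M" "is_sos (s * s * t)"
    by (simp_all add: square_mult_mem is_sos_square_mult)
  then show "s * s * x \<in> qm_adjoin M b"
    unfolding qm_adjoin_def by blast
qed

lemma subset_qm_adjoin: "M \<subseteq> qm_adjoin M b"
proof
  fix a assume "a \<in> M"
  moreover have "a = a + b * 0" by simp
  ultimately show "a \<in> qm_adjoin M b"
    unfolding qm_adjoin_def using is_sos_0 by blast
qed

lemma (in quadratic_module) mem_qm_adjoin: "b \<in> qm_adjoin M b"
proof -
  have "b = 0 + b * 1" by simp
  then show ?thesis
    unfolding qm_adjoin_def using zero_mem is_sos_1 by blast
qed

lemma quadratic_module_Union_chain:
  assumes "C \<noteq> {}" "\<And>M. M \<in> C \<Longrightarrow> quadratic_module M" "subset.chain A C"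
  shows "quadratic_module (\<Union>C)"
proof
  fix a b assume "a \<in> \<Union>C" "b \<in> \<Union>C"
  then obtain X Y where "X \<in> C" "Y \<in> C" "a \<in> X" "b \<in> Y" by blast
  with assms(3) have "a \<in> X \<and> b \<in> X \<or> a \<in> Y \<and> b \<in> Y"
    by (auto simp: subset_chain_def)
  with \<open>X \<in> C\<close> \<open>Y \<in> C\<close> show "a + b \<in> \<Union>C"
    using assms(2) quadratic_module.add_mem by blast
next
  fix s
  from assms(1) obtain X where "X \<in> C" by blast
  then show "s * s \<in> \<Union>C"
    using assms(2) quadratic_module.square_mem by blast
next
  fix s a assume "a \<in> \<Union>C"
  then show "s * s * a \<in> \<Union>C"
    using assms(2) quadratic_module.square_mult_mem by blast
qed

lemma quadratic_module_qmodule: "quadratic_module (qmodule m g)"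
proof
  fix a b assume "a \<in> qmodule m g" "b \<in> qmodule m g"
  then obtain \<sigma> \<tau> where \<sigma>: "\<forall>j\<in>{0..m}. is_sos (\<sigma> j)" "a = \<sigma> 0 + (\<Sum>j=1..m. \<sigma> j * g j)"
    and \<tau>: "\<forall>j\<in>{0..m}. is_sos (\<tau> j)" "b = \<tau> 0 + (\<Sum>j=1..m. \<tau> j * g j)"
    unfolding qmodule_def by blast
  have "(\<Sum>j=1..m. (\<sigma> j + \<tau> j) * g j) = (\<Sum>j=1..m. \<sigma> j * g j) + (\<Sum>j=1..m. \<tau> j * g j)"
    by (simp add: distrib_right sum.distrib)
  then have "a + b = (\<sigma> 0 + \<tau> 0) + (\<Sum>j=1..m. (\<sigma> j + \<tau> j) * g j)"
    by (simp add: \<sigma>(2) \<tau>(2) ac_simps)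
  with \<sigma>(1) \<tau>(1) show "a + b \<in> qmodule m g"
    unfolding qmodule_def by (intro CollectI exI[of _ "\<lambda>j. \<sigma> j + \<tau> j"]) (simp add: is_sos_add)
next
  fix s
  show "s * s \<in> qmodule m g"
    unfolding qmodule_def
    by (intro CollectI exI[of _ "\<lambda>j. if j = 0 then s * s else 0"]) (simp add: is_sos_square is_sos_0)
next
  fix s a assume "a \<in> qmodule m g"
  then obtain \<sigma> where \<sigma>: "\<forall>j\<in>{0..m}. is_sos (\<sigma> j)" "a = \<sigma> 0 + (\<Sum>j=1..m. \<sigma> j * g j)"
    unfolding qmodule_def by blast
  have "s * s * a = s * s * \<sigma> 0 + (\<Sum>j=1..m. (s * s * \<sigma> j) * g j)"
    by (simp add: \<sigma>(2) distrib_left sum_distrib_left mult.assoc)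
  with \<sigma>(1) show "s * s * a \<in> qmodule m g"
    unfolding qmodule_def
    by (intro CollectI exI[of _ "\<lambda>j. s * s * \<sigma> j"]) (simp add: is_sos_square_mult)
qed

lemma generator_mem_qmodule:
  assumes "j \<in> {1..m}"
  shows "g j \<in> qmodule m g"
proof -
  have "(\<Sum>i=1..m. (if i = j then 1 else 0) * g i) = (\<Sum>i=1..m. if i = j then g i else 0)"
    by (intro sum.cong) auto
  also have "\<dots> = g j"
    using assms by (simp add: sum.delta)
  finally have "(\<Sum>i=1..m. (if i = j then 1 else 0) * g i) = g j" .
  with assms show ?thesis
    unfolding qmodule_def
    by (intro CollectI exI[of _ "\<lambda>i. if i = j then 1 else 0"]) (auto simp: is_sos_1 is_sos_0)
qed

lemma qmodule_k_mono:
  assumes "k \<le> k'"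
  shows "qmodule_k m g k \<subseteq> qmodule_k m g k'"
proof
  fix f assume "f \<in> qmodule_k m g k"
  then obtain \<sigma> where \<sigma>: "\<forall>j\<in>{0..m}. is_sos (\<sigma> j)" "mdeg (\<sigma> 0) \<le> 2 * k"
     "\<forall>j\<in>{1..m}. mdeg (\<sigma> j * g j) \<le> 2 * k" "f = \<sigma> 0 + (\<Sum>j=1..m. \<sigma> j * g j)"
    unfolding qmodule_k_def by blast
  have "2 * k \<le> 2 * k'"
    using assms by simp
  then have "mdeg (\<sigma> 0) \<le> 2 * k'" "\<forall>j\<in>{1..m}. mdeg (\<sigma> j * g j) \<le> 2 * k'"
    using \<sigma>(2,3) le_trans by blast+
  with \<sigma>(1,4) show "f \<in> qmodule_k m g k'"
    unfolding qmodule_k_def by blast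
qed

lemma eventually_mem_qmodule_k:
  assumes "f \<in> qmodule m g"
  shows "eventually (\<lambda>k. f \<in> qmodule_k m g k) sequentially"
proof -
  obtain \<sigma> where \<sigma>: "\<forall>j\<in>{0..m}. is_sos (\<sigma> j)" "f = \<sigma> 0 + (\<Sum>j=1..m. \<sigma> j * g j)"
    using assms unfolding qmodule_def by blast
  define D where "D = mdeg (\<sigma> 0) + (\<Sum>j=1..m. mdeg (\<sigma> j * g j))"
  have "mdeg (\<sigma> j * g j) \<le> D" if "j \<in> {1..m}" for j
    unfolding D_def using that by (intro trans_le_add2 member_le_sum) auto
  moreover have "mdeg (\<sigma> 0) \<le> D"
    unfolding D_def by simp
  ultimately have "mdeg (\<sigma> 0) \<le> 2 * k" "\<forall>j\<in>{1..m}. mdeg (\<sigma> j * g j) \<le> 2 * k" if "D \<le> k" for k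
    using that by (auto intro: le_trans[of _ D "2 * k"])
  with \<sigma> have "f \<in> qmodule_k m g k" if "D \<le> k" for k
    using that unfolding qmodule_k_def by blast
  then show ?thesis
    unfolding eventually_sequentially by blast
qed

lemma meval_nonneg_if_mem_qmodule_k:
  assumes "f \<in> qmodule_k m g k" "x \<in> semialg m g"
  shows "meval f x \<ge> 0"
proof -
  obtain \<sigma> where \<sigma>: "\<forall>j\<in>{0..m}. is_sos (\<sigma> j)" "f = \<sigma> 0 + (\<Sum>j=1..m. \<sigma> j * g j)"
    using assms(1) unfolding qmodule_k_def by blast
  have "meval f x = meval (\<sigma> 0) x + (\<Sum>j=1..m. meval (\<sigma> j) x * meval (g j) x)"
    by (simp add: \<sigma>(2))
  also have "\<dots> \<ge> 0"
    using \<sigma>(1) assms(2) unfolding semialg_def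
    by (intro add_nonneg_nonneg sum_nonneg mult_nonneg_nonneg) (auto intro: is_sos_meval_nonneg)
  finally show ?thesis .
qed

section \<open>Archimedean quadratic modules\<close>

locale archimedean_qm = quadratic_module +
  assumes bounded_above: "\<exists>B. mconst B - a \<in> M"
begin

lemma bounded_above_ge: "\<exists>B\<ge>c. mconst B - a \<in> M"
proof -
  obtain B where "mconst B - a \<in> M"
    using bounded_above by blast
  then have "mconst B - a + mconst (max B c - B) \<in> M"
    by (intro add_mconst_mem) auto
  moreover have "mconst B - a + mconst (max B c - B) = mconst (max B c) - a"
    by (simp add: mconst_diff)
  ultimately show ?thesis
    by (intro exI[of _ "max B c"]) auto
qed

end

lemma archimedean_qmI:
  fixes M :: "'n::finite mpoly set"
  assumes M: "quadratic_module M" and "c > 0" and c: "mconst c - (\<Sum>i\<in>UNIV. mvar i * mvar i) \<in> M"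
  shows "archimedean_qm M"
proof -
  interpret quadratic_module M by (fact M)
  have square_bounded: "\<exists>B\<ge>0. mconst B - p * p \<in> M" for p
  proof (induction p rule: mpoly_induct)
    case (const a)
    show ?case
      by (intro exI[of _ "a * a"]) (simp add: mconst_mult zero_mem)
  next
    case (var i)
    have "(\<Sum>j\<in>UNIV. mvar j * mvar j) = mvar i * mvar i + (\<Sum>j\<in>UNIV - {i}. mvar j * mvar j)"
      by (simp add: sum.remove)
    then have "mconst c - mvar i * mvar i = (mconst c - (\<Sum>j\<in>UNIV. mvar j * mvar j)) + (\<Sum>j\<in>UNIV - {i}. mvar j * mvar j)"
      by simp
    also have "\<dots> \<in> M"
      by (intro add_mem c sum_mem square_mem)
    finally show ?case
      using \<open>c > 0\<close> by (intro exI[of _ c]) auto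
  next
    case (add p q)
    then obtain B C where BC: "B \<ge> 0" "C \<ge> 0" "mconst B - p * p \<in> M" "mconst C - q * q \<in> M"
      by blast
    have "mconst (B + B + C + C) - (p + q) * (p + q) =
        (mconst B - p * p) + (mconst B - p * p) + (mconst C - q * q) + (mconst C - q * q) + (p - q) * (p - q)"
      unfolding mconst_add by (simp add: algebra_simps)
    also have "\<dots> \<in> M"
      using BC by (intro add_mem square_mem)
    finally show ?case
      using BC by (intro exI[of _ "B + B + C + C"]) auto
  next
    case (mult p q)
    then obtain B C where "B \<ge> 0" "C \<ge> 0" "mconst B - p * p \<in> M" "mconst C - q * q \<in> M"
      by blast
    moreover have "mconst (B * C) - (p * q) * (p * q) = mconst C * (mconst B - p * p) + p * p * (mconst C - q * q)"
      by (simp add: mconst_mult algebra_simps)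
    ultimately show ?case
      by (intro exI[of _ "B * C"]) (auto intro!: add_mem mconst_mult_mem square_mult_mem)
  qed
  show ?thesis
  proof
    fix a
    obtain B where B: "mconst B - a * a \<in> M"
      using square_bounded by blast
    let ?h = "mconst (1 / 2)"
    have "?h * ((1 - a) * (1 - a) + (mconst B - a * a)) = ?h * (1 + mconst B) - (?h + ?h) * a"
      by (simp add: algebra_simps)
    also have "\<dots> = mconst ((B + 1) / 2) - a"
      unfolding mconst_1[symmetric] mconst_add[symmetric] mconst_mult[symmetric] by (simp add: mconst_1 add.commute)
    finally have "mconst ((B + 1) / 2) - a = ?h * ((1 - a) * (1 - a) + (mconst B - a * a))" ..
    also have "\<dots> \<in> M"
      using B by (intro mconst_mult_mem add_mem square_mem) auto
    finally show "\<exists>B. mconst B - a \<in> M" ..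
  qed
qed

lemma (in quadratic_module) add_mconst_mem_decrement:
  assumes t: "is_sos t" "f * t - 1 \<in> M" "l > 0" "mconst l - t \<in> M"
    and u: "r \<ge> 0" "f + mconst r \<in> M" "mconst s - (f + mconst r) \<in> M" and "s > 0"
  shows "f + mconst (r - 1 / (l * l * s)) \<in> M"
proof -
  define \<delta> where "\<delta> = 1 / (l * l * s)"
  have "\<delta> > 0" and \<delta>: "\<delta> * s * l * l = 1"
    using t(3) \<open>s > 0\<close> by (simp_all add: \<delta>_def)
  let ?d = "mconst \<delta>" and ?u = "f + mconst r"
  have "mconst (l * l) - t * t = (mconst l + t) * (mconst l - t)"
    by (simp add: mconst_mult algebra_simps)
  also have "\<dots> \<in> M"
    using t by (intro sos_mult_mem is_sos_add is_sos_mconst) auto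
  finally have "mconst (\<delta> * \<delta> * s) * (mconst (l * l) - t * t) \<in> M"
    using \<open>s > 0\<close> by (intro mconst_mult_mem) auto
  then have 5: "?d * ?d * mconst s * (mconst l * mconst l - t * t) \<in> M"
    by (simp only: mconst_mult)
  have "mconst (\<delta> + \<delta>) * (f * t - 1) \<in> M"
    using t(2) \<open>\<delta> > 0\<close> by (intro mconst_mult_mem) auto
  then have 1: "(?d + ?d) * (f * t - 1) \<in> M"
    by (simp only: mconst_add)
  have "mconst ((\<delta> + \<delta>) * r) * t \<in> M"
    using t(1) u(1) \<open>\<delta> > 0\<close> by (intro mconst_mult_mem[OF _ sos_mem]) auto
  then have 2: "(?d + ?d) * mconst r * t \<in> M"
    by (simp only: mconst_add mconst_mult)
  have 3: "(1 - ?d * t) * (1 - ?d * t) * ?u \<in> M" and 4: "(?d * t) * (?d * t) * (mconst s - ?u) \<in> M"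
    using u by (auto intro: square_mult_mem)
  have "(?d + ?d) * (f * t - 1) + (?d + ?d) * mconst r * t + (1 - ?d * t) * (1 - ?d * t) * ?u
      + (?d * t) * (?d * t) * (mconst s - ?u) + ?d * ?d * mconst s * (mconst l * mconst l - t * t) \<in> M"
    by (intro add_mem 1 2 3 4 5)
  also have "(?d + ?d) * (f * t - 1) + (?d + ?d) * mconst r * t + (1 - ?d * t) * (1 - ?d * t) * ?u
      + (?d * t) * (?d * t) * (mconst s - ?u) + ?d * ?d * mconst s * (mconst l * mconst l - t * t)
      = ?u - ?d - ?d + ?d * (?d * mconst s * mconst l * mconst l)"
    by (simp add: algebra_simps)
  also have "\<dots> = f + mconst (r - \<delta>)"
    using \<delta> by (simp add: mconst_1 mconst_diff flip: mconst_mult)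
  finally show ?thesis
    unfolding \<delta>_def .
qed

lemma (in archimedean_qm) mem_if_mult_sos_diff_one_mem:
  assumes t: "is_sos t" "f * t - 1 \<in> M"
  shows "f \<in> M"
proof -
  obtain l where l: "l \<ge> 1" "mconst l - t \<in> M"
    using bounded_above_ge by blast
  obtain B where B: "B \<ge> 0" "mconst B - f \<in> M"
    using bounded_above_ge by blast
  obtain R where R: "R \<ge> 0" "mconst R - - f \<in> M"
    using bounded_above_ge by blast
  define s where "s = B + R + 1"
  define \<delta> where "\<delta> = 1 / (l * l * s)"
  have "s > 0" "\<delta> > 0"
    using l B R by (simp_all add: s_def \<delta>_def)
  have lower: "f + mconst (r - \<delta>) \<in> M" if r: "0 \<le> r" "r \<le> R" "f + mconst r \<in> M" for r
  proof -
    have "mconst s - (f + mconst r) = (mconst B - f) + mconst (s - B - r)"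
      by (simp add: mconst_diff)
    also have "\<dots> \<in> M"
      using B r by (intro add_mconst_mem) (auto simp: s_def)
    finally show ?thesis
      unfolding \<delta>_def using t l r \<open>s > 0\<close> by (intro add_mconst_mem_decrement) auto
  qed
  have "f \<in> M" if "0 \<le> r" "r \<le> R" "f + mconst r \<in> M" "r < real n * \<delta>" for n r
    using that
  proof (induction n arbitrary: r)
    case (Suc n)
    then have lowered: "f + mconst (r - \<delta>) \<in> M"
      by (intro lower) auto
    show ?case
    proof (cases "r < \<delta>")
      case True
      have "f = (f + mconst (r - \<delta>)) + mconst (\<delta> - r)"
        by (simp add: mconst_diff)
      also have "\<dots> \<in> M"
        using True by (intro add_mconst_mem[OF lowered]) simp
      finally show ?thesis .
    next
      case False
      with Suc.prems lowered \<open>\<delta> > 0\<close> show ?thesis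
        by (intro Suc.IH[of "r - \<delta>"]) (auto simp: algebra_simps)
    qed
  qed (use \<open>\<delta> > 0\<close> in simp)
  moreover have "R < real (nat \<lceil>R / \<delta>\<rceil> + 1) * \<delta>"
  proof -
    have "R / \<delta> \<le> real (nat \<lceil>R / \<delta>\<rceil>)"
      by (rule real_nat_ceiling_ge)
    with \<open>\<delta> > 0\<close> show ?thesis
      by (simp add: pos_divide_le_eq distrib_right)
  qed
  moreover have "f + mconst R \<in> M"
    using R(2) by (simp add: add.commute)
  ultimately show ?thesis
    using R(1) by blast
qed

section \<open>Maximal proper quadratic modules\<close>

definition qm_value :: "'n mpoly set \<Rightarrow> 'n mpoly \<Rightarrow> real" where
  "qm_value M a = Sup {r. a - mconst r \<in> M}"

locale maximal_proper_qm = archimedean_qm +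
  assumes proper: "-1 \<notin> M"
    and maximal: "\<And>M'. quadratic_module M' \<Longrightarrow> M \<subseteq> M' \<Longrightarrow> -1 \<notin> M' \<Longrightarrow> M' = M"
begin

lemma minus_one_eq_if_not_mem:
  assumes "b \<notin> M"
  obtains a t where "a \<in> M" "is_sos t" "-1 = a + b * t"
proof -
  have "-1 \<in> qm_adjoin M b"
  proof (rule ccontr)
    assume "-1 \<notin> qm_adjoin M b"
    then have "qm_adjoin M b = M"
      by (intro maximal quadratic_module_qm_adjoin subset_qm_adjoin)
    with mem_qm_adjoin assms show False
      by blast
  qed
  then show ?thesis
    using that unfolding qm_adjoin_def by blast
qed

lemma mconst_mem_imp_nonneg:
  assumes "mconst c \<in> M"
  shows "c \<ge> 0"
proof (rule ccontr)
  assume "\<not> c \<ge> 0"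
  then have "mconst (- 1 / c) * mconst c \<in> M"
    using assms by (intro mconst_mult_mem) auto
  also have "mconst (- 1 / c) * mconst c = -1"
    using \<open>\<not> c \<ge> 0\<close> by (simp add: mconst_uminus mconst_1 flip: mconst_mult)
  finally show False
    using proper by simp
qed

lemma mem_if_add_mconst_mem:
  assumes "\<And>\<epsilon>. \<epsilon> > 0 \<Longrightarrow> b + mconst \<epsilon> \<in> M"
  shows "b \<in> M"
proof (rule ccontr)
  assume "b \<notin> M"
  then obtain a t where a: "a \<in> M" "is_sos t" "-1 = a + b * t"
    by (rule minus_one_eq_if_not_mem)
  obtain B where B: "B \<ge> 1" "mconst B - t \<in> M"
    using bounded_above_ge by blast
  define \<epsilon> where "\<epsilon> = 1 / (2 * B)"
  have "\<epsilon> > 0"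
    using B by (simp add: \<epsilon>_def)
  have "t * (b + mconst \<epsilon>) \<in> M"
    using a(2) assms \<open>\<epsilon> > 0\<close> by (intro sos_mult_mem) auto
  moreover have "mconst \<epsilon> * (mconst B - t) \<in> M"
    using B \<open>\<epsilon> > 0\<close> by (intro mconst_mult_mem) auto
  ultimately have "a + t * (b + mconst \<epsilon>) + mconst \<epsilon> * (mconst B - t) \<in> M"
    using a(1) by (blast intro: add_mem)
  also have "a + t * (b + mconst \<epsilon>) + mconst \<epsilon> * (mconst B - t) = (a + b * t) + mconst (\<epsilon> * B)"
    by (simp add: mconst_mult algebra_simps)
  also have "\<dots> = mconst (\<epsilon> * B - 1)"
    unfolding a(3)[symmetric] by (simp add: mconst_diff mconst_1)
  finally have "\<epsilon> * B - 1 \<ge> 0"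
    by (rule mconst_mem_imp_nonneg)
  moreover have "\<epsilon> * B = 1 / 2"
    using B(1) by (simp add: \<epsilon>_def)
  ultimately show False
    by linarith
qed

lemma support_mult_mem:
  assumes "b \<in> M" "- b \<in> M"
  shows "c * b \<in> M"
proof -
  let ?h = "mconst (1 / 2)"
  have "?h + ?h = 1"
    by (simp add: mconst_1 flip: mconst_add)
  have "(?h * (c + 1)) * (?h * (c + 1)) * b + (?h * (c - 1)) * (?h * (c - 1)) * - b
      = (?h + ?h) * (?h + ?h) * c * b"
    by (simp add: algebra_simps)
  also have "\<dots> = c * b"
    unfolding \<open>?h + ?h = 1\<close> by simp
  finally have "c * b = (?h * (c + 1)) * (?h * (c + 1)) * b + (?h * (c - 1)) * (?h * (c - 1)) * - b" ..
  also have "\<dots> \<in> M"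
    using assms by (intro add_mem square_mult_mem)
  finally show ?thesis .
qed

lemma mem_or_uminus_mem: "c \<in> M \<or> - c \<in> M"
proof (rule ccontr)
  assume "\<not> (c \<in> M \<or> - c \<in> M)"
  then obtain a t a' t' where a: "a \<in> M" "is_sos t" "-1 = a + c * t"
    and a': "a' \<in> M" "is_sos t'" "-1 = a' + - c * t'"
    by (metis minus_one_eq_if_not_mem)
  have "a = -1 - c * t" "a' = -1 + c * t'"
    using a(3) a'(3) by (simp_all add: algebra_simps)
  then have "- t = t' * a + t * a' + t'"
    by (simp only:) (simp add: algebra_simps)
  also have "\<dots> \<in> M"
    by (rule add_mem[OF add_mem[OF sos_mult_mem[OF a'(2) a(1)] sos_mult_mem[OF a(2) a'(1)]] sos_mem[OF a'(2)]])
  finally have "c * t \<in> M"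
    by (rule support_mult_mem[OF sos_mem[OF a(2)]])
  with a(1) have "a + c * t \<in> M"
    by (rule add_mem)
  with proper a(3) show False
    by simp
qed

lemma qm_value_upper:
  assumes "a - mconst r \<in> M"
  shows "r \<le> qm_value M a"
proof -
  obtain B where B: "mconst B - a \<in> M"
    using bounded_above by blast
  have "s \<le> B" if "a - mconst s \<in> M" for s
  proof -
    have "(mconst B - a) + (a - mconst s) \<in> M"
      using B that by (rule add_mem)
    then show ?thesis
      using mconst_mem_imp_nonneg[of "B - s"] by (simp add: mconst_diff)
  qed
  then show ?thesis
    unfolding qm_value_def using assms by (intro cSup_upper bdd_aboveI) auto
qed

lemma diff_qm_value_mem: "a - mconst (qm_value M a) \<in> M"
proof (rule mem_if_add_mconst_mem)
  fix \<epsilon> :: real assume "\<epsilon> > 0"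
  obtain B where "mconst B - - a \<in> M"
    using bounded_above by blast
  then have "a - mconst (- B) \<in> M"
    by (simp add: mconst_uminus add.commute)
  then have "{r. a - mconst r \<in> M} \<noteq> {}"
    by blast
  then obtain r where r: "a - mconst r \<in> M" "qm_value M a - \<epsilon> < r"
    using less_cSupD[of "{r. a - mconst r \<in> M}" "qm_value M a - \<epsilon>"] \<open>\<epsilon> > 0\<close>
    by (auto simp: qm_value_def)
  then have "a - mconst r + mconst (r - (qm_value M a - \<epsilon>)) \<in> M"
    by (intro add_mconst_mem) auto
  also have "a - mconst r + mconst (r - (qm_value M a - \<epsilon>)) = a - mconst (qm_value M a) + mconst \<epsilon>"
    by (simp add: mconst_diff)
  finally show "a - mconst (qm_value M a) + mconst \<epsilon> \<in> M" .
qed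

lemma qm_value_diff_mem: "mconst (qm_value M a) - a \<in> M"
proof (rule mem_if_add_mconst_mem)
  fix \<epsilon> :: real assume "\<epsilon> > 0"
  have "a - mconst (qm_value M a + \<epsilon>) \<notin> M"
    using qm_value_upper \<open>\<epsilon> > 0\<close> by fastforce
  then have "- (a - mconst (qm_value M a + \<epsilon>)) \<in> M"
    using mem_or_uminus_mem by blast
  also have "- (a - mconst (qm_value M a + \<epsilon>)) = mconst (qm_value M a) - a + mconst \<epsilon>"
    by (simp add: mconst_add)
  finally show "mconst (qm_value M a) - a + mconst \<epsilon> \<in> M" .
qed

lemma qm_value_eqI:
  assumes "a - mconst r \<in> M" "mconst r - a \<in> M"
  shows "qm_value M a = r"
proof -
  have "(a - mconst r) + (mconst (qm_value M a) - a) \<in> M"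
    using assms(1) qm_value_diff_mem by (rule add_mem)
  also have "(a - mconst r) + (mconst (qm_value M a) - a) = mconst (qm_value M a - r)"
    by (simp add: mconst_diff)
  finally have "qm_value M a - r \<ge> 0"
    by (rule mconst_mem_imp_nonneg)
  have "(mconst r - a) + (a - mconst (qm_value M a)) \<in> M"
    using assms(2) diff_qm_value_mem by (rule add_mem)
  also have "(mconst r - a) + (a - mconst (qm_value M a)) = mconst (r - qm_value M a)"
    by (simp add: mconst_diff)
  finally have "r - qm_value M a \<ge> 0"
    by (rule mconst_mem_imp_nonneg)
  with \<open>qm_value M a - r \<ge> 0\<close> show ?thesis
    by simp
qed

lemma qm_value_mconst: "qm_value M (mconst c) = c"
  by (rule qm_value_eqI) (simp_all add: zero_mem)

lemma qm_value_add: "qm_value M (a + b) = qm_value M a + qm_value M b"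
proof (rule qm_value_eqI)
  show "a + b - mconst (qm_value M a + qm_value M b) \<in> M"
    using add_mem[OF diff_qm_value_mem diff_qm_value_mem] by (simp add: mconst_add algebra_simps)
  show "mconst (qm_value M a + qm_value M b) - (a + b) \<in> M"
    using add_mem[OF qm_value_diff_mem qm_value_diff_mem] by (simp add: mconst_add algebra_simps)
qed

lemma qm_value_mult: "qm_value M (a * b) = qm_value M a * qm_value M b"
proof (rule qm_value_eqI)
  let ?x = "a - mconst (qm_value M a)" and ?y = "b - mconst (qm_value M b)"
  have support: "?x \<in> M" "- ?x \<in> M" "?y \<in> M" "- ?y \<in> M"
    using diff_qm_value_mem qm_value_diff_mem by simp_all
  have "a * b - mconst (qm_value M a * qm_value M b) = b * ?x + mconst (qm_value M a) * ?y"
    by (simp add: mconst_mult algebra_simps)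
  also have "\<dots> \<in> M"
    using support by (intro add_mem support_mult_mem)
  finally show "a * b - mconst (qm_value M a * qm_value M b) \<in> M" .
  have "mconst (qm_value M a * qm_value M b) - a * b = b * - ?x + mconst (qm_value M a) * - ?y"
    by (simp add: mconst_mult algebra_simps)
  also have "\<dots> \<in> M"
    using support by (intro add_mem support_mult_mem) simp_all
  finally show "mconst (qm_value M a * qm_value M b) - a * b \<in> M" .
qed

lemma qm_value_nonneg: "a \<in> M \<Longrightarrow> qm_value M a \<ge> 0"
  using qm_value_upper[of a 0] by (simp add: mconst_0)

end

lemma maximal_proper_qm_point:
  fixes M :: "'n::finite mpoly set"
  assumes "maximal_proper_qm M"
  obtains x where "\<And>p. p \<in> M \<Longrightarrow> meval p x \<ge> 0"
proof
  interpret maximal_proper_qm M by (fact assms)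
  fix p assume "p \<in> M"
  have "qm_value M p = meval p (\<chi> i. qm_value M (mvar i))"
    by (rule ring_hom_eq_meval) (simp_all add: qm_value_add qm_value_mult qm_value_mconst)
  with \<open>p \<in> M\<close> show "meval p (\<chi> i. qm_value M (mvar i)) \<ge> 0"
    using qm_value_nonneg[of p] by simp
qed

section \<open>Putinar's Positivstellensatz\<close>

lemma exists_sos_mult_diff_one_mem:
  fixes Q :: "'n::finite mpoly set"
  assumes "archimedean_qm Q"
    and pos: "\<And>x. (\<And>q. q \<in> Q \<Longrightarrow> meval q x \<ge> 0) \<Longrightarrow> meval f x > 0"
  shows "\<exists>t. is_sos t \<and> f * t - 1 \<in> Q"
proof (rule ccontr)
  interpret Q: archimedean_qm Q by (fact assms(1))
  assume no_certificate: "\<nexists>t. is_sos t \<and> f * t - 1 \<in> Q"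
  define A where "A = {M. quadratic_module M \<and> qm_adjoin Q (- f) \<subseteq> M \<and> -1 \<notin> M}"
  have "-1 \<notin> qm_adjoin Q (- f)"
  proof
    assume "-1 \<in> qm_adjoin Q (- f)"
    then obtain q t where "q \<in> Q" "is_sos t" "-1 = q + - f * t"
      unfolding qm_adjoin_def by blast
    then have "is_sos t \<and> f * t - 1 \<in> Q"
      by (simp add: algebra_simps)
    with no_certificate show False
      by blast
  qed
  then have "A \<noteq> {}"
    unfolding A_def using Q.quadratic_module_qm_adjoin by blast
  moreover have "\<Union>C \<in> A" if "C \<noteq> {}" "subset.chain A C" for C
    using that quadratic_module_Union_chain[OF that(1) _ that(2)]
    unfolding A_def subset_chain_def by blast
  ultimately obtain M where "M \<in> A" and M_max: "\<And>M'. M' \<in> A \<Longrightarrow> M \<subseteq> M' \<Longrightarrow> M' = M"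
    using subset_Zorn_nonempty[of A] by blast
  then have M: "quadratic_module M" "qm_adjoin Q (- f) \<subseteq> M" "-1 \<notin> M"
    unfolding A_def by blast+
  interpret quadratic_module M by (fact M(1))
  have "Q \<subseteq> M" and "- f \<in> M"
    using M(2) subset_qm_adjoin Q.mem_qm_adjoin by blast+
  have "maximal_proper_qm M"
  proof unfold_locales
    show "\<exists>B. mconst B - a \<in> M" for a
      using Q.bounded_above \<open>Q \<subseteq> M\<close> by blast
    show "M' = M" if "quadratic_module M'" "M \<subseteq> M'" "-1 \<notin> M'" for M'
      using that M(2) by (intro M_max) (auto simp: A_def)
  qed (fact M(3))
  then obtain x where x: "\<And>p. p \<in> M \<Longrightarrow> meval p x \<ge> 0"
    using maximal_proper_qm_point by blast
  have "meval f x > 0"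
    using x \<open>Q \<subseteq> M\<close> by (intro pos) blast
  moreover have "meval (- f) x \<ge> 0"
    using x \<open>- f \<in> M\<close> by blast
  ultimately show False
    by simp
qed

theorem putinar_positivstellensatz:
  assumes "archimedean m g" "\<forall>x\<in>semialg m g. meval f x > 0"
  shows "f \<in> qmodule m g"
proof -
  interpret quadratic_module "qmodule m g"
    by (rule quadratic_module_qmodule)
  obtain c where "c > 0" "mconst c - (\<Sum>i\<in>UNIV. mvar i * mvar i) \<in> qmodule m g"
    using assms(1) unfolding archimedean_def by blast
  then interpret archimedean_qm "qmodule m g"
    by (intro archimedean_qmI quadratic_module_qmodule)
  have "\<exists>t. is_sos t \<and> f * t - 1 \<in> qmodule m g"
  proof (rule exists_sos_mult_diff_one_mem)
    fix x assume "\<And>q. q \<in> qmodule m g \<Longrightarrow> meval q x \<ge> 0"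
    then have "x \<in> semialg m g"
      unfolding semialg_def using generator_mem_qmodule by blast
    with assms(2) show "meval f x > 0" by blast
  qed unfold_locales
  then show ?thesis
    using mem_if_mult_sos_diff_one_mem by blast
qed

section \<open>The hierarchy of lower bounds\<close>

definition rho_k_feasible ::
    "nat \<Rightarrow> nat \<Rightarrow> (nat \<Rightarrow> 'n::finite mpoly) \<Rightarrow> (nat \<Rightarrow> 'n mpoly) \<Rightarrow> (nat \<Rightarrow> 'n mpoly) \<Rightarrow> nat \<Rightarrow> real \<Rightarrow> bool"
  where "rho_k_feasible N m p q g k c \<longleftrightarrow> (\<exists>h :: nat \<Rightarrow> 'n mpoly.
      (\<forall>i\<in>{2..N}. mdeg (h i) \<le> 2 * k - max (mdeg (q 1)) (mdeg (q i))) \<and>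
      p 1 + ((\<Sum>i=2..N. h i) - mconst c) * q 1 \<in> qmodule_k m g k \<and>
      (\<forall>i\<in>{2..N}. p i - h i * q i \<in> qmodule_k m g k))"

lemma rho_k_eq_Sup_feasible: "rho_k N m p q g k = Sup {ereal c | c. rho_k_feasible N m p q g k c}"
  unfolding rho_k_def rho_k_feasible_def by simp

lemma rho_k_feasible_Suc:
  assumes "rho_k_feasible N m p q g k c"
  shows "rho_k_feasible N m p q g (Suc k) c"
proof -
  obtain h where h: "\<forall>i\<in>{2..N}. mdeg (h i) \<le> 2 * k - max (mdeg (q 1)) (mdeg (q i))"
    "p 1 + ((\<Sum>i=2..N. h i) - mconst c) * q 1 \<in> qmodule_k m g k"
    "\<forall>i\<in>{2..N}. p i - h i * q i \<in> qmodule_k m g k"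
    using assms unfolding rho_k_feasible_def by blast
  have "\<forall>i\<in>{2..N}. mdeg (h i) \<le> 2 * Suc k - max (mdeg (q 1)) (mdeg (q i))"
  proof
    fix i assume "i \<in> {2..N}"
    with h(1) have "mdeg (h i) \<le> 2 * k - max (mdeg (q 1)) (mdeg (q i))"
      by blast
    also have "\<dots> \<le> 2 * Suc k - max (mdeg (q 1)) (mdeg (q i))"
      by (rule diff_le_mono) simp
    finally show "mdeg (h i) \<le> 2 * Suc k - max (mdeg (q 1)) (mdeg (q i))" .
  qed
  moreover have "qmodule_k m g k \<subseteq> qmodule_k m g (Suc k)"
    by (rule qmodule_k_mono) simp
  ultimately show ?thesis
    unfolding rho_k_feasible_def using h(2,3) by blast
qed

lemma rho_k_le_Suc: "rho_k N m p q g k \<le> rho_k N m p q g (Suc k)"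
  unfolding rho_k_eq_Sup_feasible by (rule Sup_subset_mono) (auto intro: rho_k_feasible_Suc)

lemma rho_k_feasible_le:
  assumes "N \<ge> 1" and q_pos: "\<forall>i\<in>{1..N}. \<forall>x\<in>semialg m g. meval (q i) x > 0"
    and "rho_k_feasible N m p q g k c" and x: "x \<in> semialg m g"
  shows "c \<le> (\<Sum>i=1..N. meval (p i) x / meval (q i) x)"
proof -
  obtain h where h: "p 1 + ((\<Sum>i=2..N. h i) - mconst c) * q 1 \<in> qmodule_k m g k"
    "\<forall>i\<in>{2..N}. p i - h i * q i \<in> qmodule_k m g k"
    using assms(3) unfolding rho_k_feasible_def by blast
  let ?S = "\<Sum>i=2..N. meval (h i) x"
  have "meval (p 1) x + (?S - c) * meval (q 1) x \<ge> 0"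
    using meval_nonneg_if_mem_qmodule_k[OF h(1) x] by simp
  then have "(c - ?S) * meval (q 1) x \<le> meval (p 1) x"
    by (simp add: algebra_simps)
  moreover have "meval (q 1) x > 0"
    using q_pos x \<open>N \<ge> 1\<close> by auto
  ultimately have "c - ?S \<le> meval (p 1) x / meval (q 1) x"
    by (simp add: pos_le_divide_eq)
  moreover have "meval (h i) x \<le> meval (p i) x / meval (q i) x" if "i \<in> {2..N}" for i
  proof -
    have "p i - h i * q i \<in> qmodule_k m g k"
      using h(2) that by blast
    from meval_nonneg_if_mem_qmodule_k[OF this x]
    have "meval (h i) x * meval (q i) x \<le> meval (p i) x"
      by simp
    moreover have "meval (q i) x > 0"
      using q_pos x that by auto
    ultimately show ?thesis
      by (simp add: pos_le_divide_eq)
  qed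
  then have "?S \<le> (\<Sum>i=2..N. meval (p i) x / meval (q i) x)"
    by (rule sum_mono)
  moreover have "(\<Sum>i=1..N. meval (p i) x / meval (q i) x)
      = meval (p 1) x / meval (q 1) x + (\<Sum>i=2..N. meval (p i) x / meval (q i) x)"
    using \<open>N \<ge> 1\<close> by (simp add: sum.atLeast_Suc_atMost numeral_2_eq_2)
  ultimately show ?thesis
    by linarith
qed

lemma rho_k_le_rho:
  assumes "N \<ge> 1" "\<forall>i\<in>{1..N}. \<forall>x\<in>semialg m g. meval (q i) x > 0"
  shows "rho_k N m p q g k \<le> rho N m p q g"
  unfolding rho_k_eq_Sup_feasible rho_def
  using rho_k_feasible_le[OF assms] by (auto intro!: Sup_least INF_greatest)

lemma meval_approx_from_below:
  fixes F :: "real ^ 'n::finite \<Rightarrow> real"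
  assumes "compact K" "continuous_on K F" "e > 0"
  obtains P where "\<And>x. x \<in> K \<Longrightarrow> F x - e < meval P x \<and> meval P x < F x"
proof -
  obtain w where "real_polynomial_function w" and w: "\<And>x. x \<in> K \<Longrightarrow> \<bar>F x - w x\<bar> < e / 2"
    using Stone_Weierstrass_real_polynomial_function[OF assms(1,2), of "e / 2"] \<open>e > 0\<close> by auto
  then obtain P where "meval P = w"
    using real_polynomial_function_eq_meval by blast
  then have "F x - e < meval (P - mconst (e / 2)) x \<and> meval (P - mconst (e / 2)) x < F x" if "x \<in> K" for x
    using w[OF that, unfolded abs_less_iff] \<open>meval P = w\<close> by auto
  then show ?thesis
    using that by blast
qed

lemma eventually_rho_k_feasible_if_positive:
  assumes "archimedean m g"
    and "\<forall>x\<in>semialg m g. meval (p 1 + ((\<Sum>i=2..N. h i) - mconst c) * q 1) x > 0"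
    and "\<forall>i\<in>{2..N}. \<forall>x\<in>semialg m g. meval (p i - h i * q i) x > 0"
  shows "eventually (\<lambda>k. rho_k_feasible N m p q g k c) sequentially"
proof -
  have "eventually (\<lambda>k. mdeg (h i) \<le> 2 * k - max (mdeg (q 1)) (mdeg (q i))) sequentially" for i
    unfolding eventually_sequentially
    by (rule exI[of _ "mdeg (h i) + max (mdeg (q 1)) (mdeg (q i))"]) auto
  then have degrees: "eventually (\<lambda>k. \<forall>i\<in>{2..N}. mdeg (h i) \<le> 2 * k - max (mdeg (q 1)) (mdeg (q i))) sequentially"
    by (simp add: eventually_ball_finite)
  have first: "eventually (\<lambda>k. p 1 + ((\<Sum>i=2..N. h i) - mconst c) * q 1 \<in> qmodule_k m g k) sequentially"
    using assms(1,2) by (intro eventually_mem_qmodule_k putinar_positivstellensatz)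
  have "eventually (\<lambda>k. p i - h i * q i \<in> qmodule_k m g k) sequentially" if "i \<in> {2..N}" for i
    using assms(1,3) that by (intro eventually_mem_qmodule_k putinar_positivstellensatz) auto
  then have others: "eventually (\<lambda>k. \<forall>i\<in>{2..N}. p i - h i * q i \<in> qmodule_k m g k) sequentially"
    by (simp add: eventually_ball_finite)
  from degrees first others show ?thesis
    unfolding rho_k_feasible_def by eventually_elim blast
qed

lemma eventually_rho_k_feasible:
  assumes "N \<ge> 1" and K: "compact (semialg m g)"
    and q_pos: "\<forall>i\<in>{1..N}. \<forall>x\<in>semialg m g. meval (q i) x > 0"
    and "archimedean m g" and "ereal c < rho N m p q g"
  shows "eventually (\<lambda>k. rho_k_feasible N m p q g k c) sequentially"
proof -
  let ?K = "semialg m g" and ?r = "\<lambda>i x. meval (p i) x / meval (q i) x"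
  obtain c' where "c < c'" and "ereal c' < rho N m p q g"
    using ereal_dense2[OF assms(5)] by auto
  have above: "(\<Sum>i=1..N. ?r i x) > c'" if "x \<in> ?K" for x
  proof -
    have "rho N m p q g \<le> ereal (\<Sum>i=1..N. ?r i x)"
      unfolding rho_def using that by (rule INF_lower)
    from less_le_trans[OF \<open>ereal c' < rho N m p q g\<close> this] show ?thesis
      by simp
  qed
  define e where "e = (c' - c) / N"
  have "e > 0"
    using \<open>c < c'\<close> \<open>N \<ge> 1\<close> by (simp add: e_def)
  have "\<forall>i\<in>{2..N}. \<exists>P. \<forall>x\<in>?K. ?r i x - e < meval P x \<and> meval P x < ?r i x"
  proof
    fix i assume "i \<in> {2..N}"
    then have "i \<in> {1..N}"
      by simp
    with q_pos have "\<forall>x\<in>?K. meval (q i) x \<noteq> 0"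
      by fastforce
    then have "continuous_on ?K (?r i)"
      by (intro continuous_on_divide continuous_on_meval)
    then obtain P where "\<And>x. x \<in> ?K \<Longrightarrow> ?r i x - e < meval P x \<and> meval P x < ?r i x"
      using meval_approx_from_below[OF K _ \<open>e > 0\<close>] by blast
    then show "\<exists>P. \<forall>x\<in>?K. ?r i x - e < meval P x \<and> meval P x < ?r i x"
      by blast
  qed
  from bchoice[OF this] obtain h
    where h: "\<forall>i\<in>{2..N}. \<forall>x\<in>?K. ?r i x - e < meval (h i) x \<and> meval (h i) x < ?r i x"
    by blast
  show ?thesis
  proof (rule eventually_rho_k_feasible_if_positive[OF \<open>archimedean m g\<close>]; intro ballI)
    fix i x assume i: "i \<in> {2..N}" and x: "x \<in> ?K"
    have "meval (h i) x < ?r i x" "meval (q i) x > 0"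
      using h i x q_pos by auto
    then have "meval (h i) x * meval (q i) x < meval (p i) x"
      by (simp add: pos_less_divide_eq)
    then show "meval (p i - h i * q i) x > 0"
      by simp
  next
    fix x assume x: "x \<in> ?K"
    have "(\<Sum>i=2..N. ?r i x - e) \<le> (\<Sum>i=2..N. meval (h i) x)"
      using h x by (intro sum_mono) (simp add: less_imp_le)
    moreover have "(\<Sum>i=2..N. ?r i x - e) = (\<Sum>i=2..N. ?r i x) - real (N - 1) * e"
      by (simp add: sum_subtractf)
    moreover have "real (N - 1) * e \<le> real N * e"
      using \<open>e > 0\<close> by (intro mult_right_mono) auto
    moreover have "real N * e = c' - c"
      using \<open>N \<ge> 1\<close> by (simp add: e_def)
    moreover have "(\<Sum>i=1..N. ?r i x) = ?r 1 x + (\<Sum>i=2..N. ?r i x)"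
      using \<open>N \<ge> 1\<close> by (simp add: sum.atLeast_Suc_atMost numeral_2_eq_2)
    ultimately have "?r 1 x + (\<Sum>i=2..N. meval (h i) x) - c > 0"
      using above[OF x] by linarith
    moreover have "meval (q 1) x > 0"
      using q_pos x \<open>N \<ge> 1\<close> by auto
    ultimately have "0 < (?r 1 x + (\<Sum>i=2..N. meval (h i) x) - c) * meval (q 1) x"
      by simp
    also have "\<dots> = meval (p 1 + ((\<Sum>i=2..N. h i) - mconst c) * q 1) x"
      using \<open>meval (q 1) x > 0\<close> by (simp add: field_simps)
    finally show "meval (p 1 + ((\<Sum>i=2..N. h i) - mconst c) * q 1) x > 0" .
  qed
qed

lemma rho_k_tendsto_rho:
  assumes "N \<ge> 1" "compact (semialg m g)" "\<forall>i\<in>{1..N}. \<forall>x\<in>semialg m g. meval (q i) x > 0"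
    and "archimedean m g"
  shows "rho_k N m p q g \<longlonglongrightarrow> rho N m p q g"
proof (rule order_tendstoI)
  fix a assume "a < rho N m p q g"
  then obtain c where c: "a < ereal c" "ereal c < rho N m p q g"
    using ereal_dense2 by blast
  from eventually_rho_k_feasible[OF assms c(2)]
  show "eventually (\<lambda>k. a < rho_k N m p q g k) sequentially"
  proof eventually_elim
    case (elim k)
    then have "ereal c \<le> rho_k N m p q g k"
      unfolding rho_k_eq_Sup_feasible by (intro Sup_upper) blast
    with c(1) show ?case
      by simp
  qed
next
  fix a assume "rho N m p q g < a"
  then show "eventually (\<lambda>k. rho_k N m p q g k < a) sequentially"
    by (intro always_eventually allI le_less_trans[OF rho_k_le_rho[OF assms(1,3)]])
qed

theorem theorem3p3:
  fixes N m :: nat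
    and p q g :: "nat \<Rightarrow> ('n::finite) mpoly"
  assumes "N \<ge> 1" and "m \<ge> 1"
    and "compact (semialg m g)"
    and "\<forall>i\<in>{1..N}. \<forall>x\<in>semialg m g. meval (q i) x > 0"
    and "archimedean m g"
  shows "(\<forall>k\<ge>d_min N m p q g. rho_k N m p q g k \<le> rho_k N m p q g (Suc k) \<and>
            rho_k N m p q g (Suc k) \<le> rho N m p q g)
         \<and> (rho_k N m p q g \<longlonglongrightarrow> rho N m p q g)"
proof -
  show ?thesis
    using rho_k_le_Suc rho_k_le_rho[OF assms(1,4)] rho_k_tendsto_rho[OF assms(1,3-5)] by blast
qed

end
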